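(* Let $F$ be a field and let $A$ be a unital $F$-algebra without zero divisors which is either flexible or quadratic. Then $A$ is von-Neumann finite.
   Context: An $F$-algebra is a vector space with a bilinear, not necessarily associative, multiplication; unital means it has a two-sided identity $1$. $A$ has no zero divisors if $ab=0$ implies $a=0$ or $b=0$. $A$ is flexible if $a(ba)=(ab)a$ for all $a,b\in A$. $A$ is quadratic if it is unital and $1,a,a^2$ are linearly dependent for every $a\in A$. $A$ is von-Neumann finite if $ab=1$ implies $ba=1$ for all $a,b\in A$. *)

theory Defs
  imports Complex_Main
begin

definition F_algebra :: "('f::field \<Rightarrow> 'a::ab_group_add \<Rightarrow> 'a) \<Rightarrow> ('a \<Rightarrow> 'a \<Rightarrow> 'a) \<Rightarrow> bool" where
  "F_algebra smul mul \<longleftrightarrow>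
     vector_space smul \<and>
     (\<forall>x y z. mul (x + y) z = mul x z + mul y z) \<and>
     (\<forall>x y z. mul x (y + z) = mul x y + mul x z) \<and>
     (\<forall>c x y. mul (smul c x) y = smul c (mul x y)) \<and>
     (\<forall>c x y. mul x (smul c y) = smul c (mul x y))"

definition is_identity :: "('a \<Rightarrow> 'a \<Rightarrow> 'a) \<Rightarrow> 'a \<Rightarrow> bool" where
  "is_identity mul one \<longleftrightarrow> (\<forall>x. mul one x = x \<and> mul x one = x)"

definition no_zero_divisors_alg :: "('a::zero \<Rightarrow> 'a \<Rightarrow> 'a) \<Rightarrow> bool" where
  "no_zero_divisors_alg mul \<longleftrightarrow> (\<forall>a b. mul a b = 0 \<longrightarrow> a = 0 \<or> b = 0)"

definition flexible :: "('a \<Rightarrow> 'a \<Rightarrow> 'a) \<Rightarrow> bool" where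
  "flexible mul \<longleftrightarrow> (\<forall>a b. mul a (mul b a) = mul (mul a b) a)"

definition quadratic :: "('f::field \<Rightarrow> 'a::ab_group_add \<Rightarrow> 'a) \<Rightarrow> ('a \<Rightarrow> 'a \<Rightarrow> 'a) \<Rightarrow> 'a \<Rightarrow> bool" where
  "quadratic smul mul one \<longleftrightarrow> is_identity mul one \<and>
     (\<forall>a. \<exists>\<alpha> \<beta> \<gamma>. (\<alpha>, \<beta>, \<gamma>) \<noteq> (0, 0, 0) \<and>
        smul \<alpha> one + smul \<beta> a + smul \<gamma> (mul a a) = 0)"

definition von_neumann_finite :: "('a \<Rightarrow> 'a \<Rightarrow> 'a) \<Rightarrow> 'a \<Rightarrow> bool" where
  "von_neumann_finite mul one \<longleftrightarrow> (\<forall>a b. mul a b = one \<longrightarrow> mul b a = one)"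

end

theory Submission
  imports Defs
begin

text \<open>Without zero divisors, elements \<open>\<noteq> 0\<close> can be cancelled on either side. Given
  \<open>ab = 1\<close>, flexibility gives \<open>a(ba) = (ab)a = a\<close>, so \<open>ba = 1\<close> by left cancellation.
  In the quadratic case write \<open>\<alpha> + \<beta>b + \<gamma>b\<^sup>2 = 0\<close> and \<open>x = \<gamma>b + \<beta>\<close>, so that
  \<open>xb = bx = -\<alpha>\<close>. If \<open>\<alpha> \<noteq> 0\<close> then \<open>-x/\<alpha>\<close> is a two-sided inverse of \<open>b\<close>, which by right
  cancellation equals \<open>a\<close>; if \<open>\<alpha> = 0\<close> then \<open>xb = 0\<close> forces \<open>x = 0\<close>, so \<open>b\<close> is a scalar
  and commutes with \<open>a\<close>.\<close>

locale nonassoc_algebra = vector_space smul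
  for smul :: "'f::field \<Rightarrow> 'a::ab_group_add \<Rightarrow> 'a" +
  fixes mul :: "'a \<Rightarrow> 'a \<Rightarrow> 'a"
  assumes mul_add_left: "mul (x + y) z = mul x z + mul y z"
    and mul_add_right: "mul x (y + z) = mul x y + mul x z"
    and mul_scale_left: "mul (smul c x) y = smul c (mul x y)"
    and mul_scale_right: "mul x (smul c y) = smul c (mul x y)"
begin

lemma mul_zero_left [simp]: "mul 0 x = 0"
  using mul_add_left[of 0 0 x] by simp

lemma mul_zero_right [simp]: "mul x 0 = 0"
  using mul_add_right[of x 0 0] by simp

lemma mul_diff_left: "mul (x - y) z = mul x z - mul y z"
  using mul_add_left[of "x - y" y z] by (simp add: eq_diff_eq)

lemma mul_diff_right: "mul x (y - z) = mul x y - mul x z"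
  using mul_add_right[of x "y - z" z] by (simp add: eq_diff_eq)

lemma mul_minus_left: "mul (- x) y = - mul x y"
  using mul_diff_left[of 0 x y] by simp

lemma mul_minus_right: "mul x (- y) = - mul x y"
  using mul_diff_right[of x 0 y] by simp

end

lemma F_algebra_iff_nonassoc_algebra: "F_algebra smul mul \<longleftrightarrow> nonassoc_algebra smul mul"
  unfolding F_algebra_def nonassoc_algebra_def nonassoc_algebra_axioms_def by blast

locale unital_nonassoc_domain = nonassoc_algebra smul mul
  for smul :: "'f::field \<Rightarrow> 'a::ab_group_add \<Rightarrow> 'a" and mul +
  fixes one :: 'a
  assumes one_mul [simp]: "mul one x = x"
    and mul_one [simp]: "mul x one = x"
    and no_zero_divisors: "mul x y = 0 \<Longrightarrow> x = 0 \<or> y = 0"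
begin

lemma eq_zero_if_one_eq_zero: "one = 0 \<Longrightarrow> (x::'a) = 0"
  using mul_one[of x] by (simp del: mul_one)

lemma mul_left_cancel: "a \<noteq> 0 \<Longrightarrow> mul a x = mul a y \<Longrightarrow> x = y"
  using no_zero_divisors[of a "x - y"] by (simp add: mul_diff_right)

lemma mul_right_cancel: "b \<noteq> 0 \<Longrightarrow> mul x b = mul y b \<Longrightarrow> x = y"
  using no_zero_divisors[of "x - y" b] by (simp add: mul_diff_left)

lemma right_inverse_commutes_if_flexible:
  assumes "flexible mul" and ab: "mul a b = one"
  shows "mul b a = one"
proof (cases "a = 0")
  case True
  then show ?thesis using ab by simp
next
  case False
  have "mul a (mul b a) = mul a one"
    using assms unfolding flexible_def by (metis one_mul mul_one)
  then show ?thesis using mul_left_cancel[OF False] by blast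
qed

lemma right_inverse_commutes_if_invertible:
  assumes ab: "mul a b = one" and yb: "mul y b = one" and "mul b y = one"
  shows "mul b a = one"
proof (cases "b = 0")
  case True
  then show ?thesis using ab by simp
next
  case False
  then have "y = a" using mul_right_cancel[of b y a] ab yb by simp
  then show ?thesis using \<open>mul b y = one\<close> by simp
qed

lemma scalar_mul_commute: "mul (smul c one) a = mul a (smul c one)"
  by (simp add: mul_scale_left mul_scale_right)

lemma scalar_if_linear_relation_with_one:
  assumes nontrivial: "(\<beta>, \<gamma>) \<noteq> (0, 0)" and rel: "smul \<gamma> b + smul \<beta> one = 0"
  shows "\<exists>c. b = smul c one"
proof (cases "\<gamma> = 0")
  case True
  then have "one = 0" using nontrivial rel by simp
  then have "b = smul 0 one" using eq_zero_if_one_eq_zero[of b] by simp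
  then show ?thesis ..
next
  case False
  have "smul \<gamma> b = smul \<gamma> (smul (- \<beta> / \<gamma>) one)"
    using rel False by (simp add: eq_neg_iff_add_eq_0)
  then show ?thesis using False scale_left_imp_eq by blast
qed

lemma quadratic_element_scalar_or_invertible:
  assumes nontrivial: "(\<alpha>, \<beta>, \<gamma>) \<noteq> (0, 0, 0)"
    and rel: "smul \<alpha> one + smul \<beta> b + smul \<gamma> (mul b b) = 0"
  shows "(\<exists>c. b = smul c one) \<or> (\<exists>y. mul y b = one \<and> mul b y = one)"
proof -
  define x where "x = smul \<gamma> b + smul \<beta> one"
  have xb: "mul x b = - smul \<alpha> one"
    unfolding x_def using rel
    by (simp add: mul_add_left mul_scale_left eq_neg_iff_add_eq_0 algebra_simps)
  have bx: "mul b x = - smul \<alpha> one"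
    unfolding x_def using rel
    by (simp add: mul_add_right mul_scale_right eq_neg_iff_add_eq_0 algebra_simps)
  show ?thesis
  proof (cases "\<alpha> = 0")
    case False
    define y where "y = smul (- inverse \<alpha>) x"
    have "mul y b = one" and "mul b y = one"
      unfolding y_def using False
      by (simp_all add: mul_scale_left mul_scale_right mul_minus_left mul_minus_right xb bx)
    then show ?thesis by blast
  next
    case True
    then have "x = 0 \<or> b = 0" using no_zero_divisors xb by simp
    moreover have "\<exists>c. b = smul c one" if "x = 0"
      using scalar_if_linear_relation_with_one[of \<beta> \<gamma> b] that nontrivial True
      unfolding x_def by simp
    moreover have "b = smul 0 one" if "b = 0"
      using that by simp
    ultimately show ?thesis by blast
  qed
qed

lemma right_inverse_commutes_if_quadratic:
  assumes "quadratic smul mul one" and ab: "mul a b = one"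
  shows "mul b a = one"
proof -
  obtain \<alpha> \<beta> \<gamma> where "(\<alpha>, \<beta>, \<gamma>) \<noteq> (0, 0, 0)"
    and "smul \<alpha> one + smul \<beta> b + smul \<gamma> (mul b b) = 0"
    using assms(1) unfolding quadratic_def by blast
  then consider c where "b = smul c one" | y where "mul y b = one" "mul b y = one"
    using quadratic_element_scalar_or_invertible by blast
  then show ?thesis
  proof cases
    case (1 c)
    then show ?thesis using ab scalar_mul_commute[of c a] by simp
  next
    case (2 y)
    then show ?thesis using right_inverse_commutes_if_invertible[OF ab] by blast
  qed
qed

end

theorem proposition4p3:
  fixes smul :: "'f::field \<Rightarrow> 'a::ab_group_add \<Rightarrow> 'a"
    and mul :: "'a \<Rightarrow> 'a \<Rightarrow> 'a"
    and one :: 'a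
  assumes "F_algebra smul mul"
    and "is_identity mul one"
    and "no_zero_divisors_alg mul"
    and "flexible mul \<or> quadratic smul mul one"
  shows "von_neumann_finite mul one"
proof -
  interpret unital_nonassoc_domain smul mul one
    using assms(1-3)
    unfolding unital_nonassoc_domain_def unital_nonassoc_domain_axioms_def
      F_algebra_iff_nonassoc_algebra is_identity_def no_zero_divisors_alg_def
    by blast
  show ?thesis
    unfolding von_neumann_finite_def
    using assms(4) right_inverse_commutes_if_flexible right_inverse_commutes_if_quadratic
    by blast
qed

end
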